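(* For any $0\le i\le k\le r$, if $\mathscr I=[I_0,\dots,I_k]$ is a prime ideal of $\Omega_{H_k}$, then its restriction $[I_0,\dots,I_i]$ is a prime ideal of $\Omega_{H_i}$.
   Context: Fix a prime $p$ and an integer $r\ge0$. For $0\le k\le r$ let $R_k$ be the commutative ring which is free as a $\mathbb{Z}$-module with basis $X_{k,0},\dots,X_{k,k}$ and multiplication $X_{k,i}X_{k,j}=p^{k-\max(i,j)}X_{k,\min(i,j)}$; thus $X_{k,k}=1$, and an integer $n$ is identified with $nX_{k,k}$. For $0\le k\le\ell\le r$ define: the additive map $\mathrm{ind}^\ell_k:R_k\to R_\ell$, $X_{k,i}\mapsto X_{\ell,i}$; the ring homomorphism $\mathrm{res}^\ell_k:R_\ell\to R_k$, $\mathrm{res}^\ell_k(X_{\ell,i})=p^{\ell-k}X_{k,i}$ if $i\le k$ and $=p^{\ell-i}$ if $i\ge k$; and the multiplicative map $\mathrm{jnd}^\ell_k:R_k\to R_\ell$, $$\mathrm{jnd}^\ell_k\Big(\sum_{i=0}^k m_iX_{k,i}\Big)=m_kX_{\ell,\ell}+\sum_{k\le i<\ell}\frac{m_k^{p^{\ell-i}}-m_k^{p^{\ell-i-1}}}{p^{\ell-i}}X_{\ell,i}+\sum_{0\le i<k}\frac{(\sum_{s=i}^k m_sp^{k-s})^{p^{\ell-k}}-(\sum_{s=i+1}^k m_sp^{k-s})^{p^{\ell-k}}}{p^{\ell-i}}X_{\ell,i}$$ ($m_i\in\mathbb{Z}$). For $k=\ell$ these maps are the identity. These data form the Burnside Tambara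 functor on $\mathbb{Z}/p^r\mathbb{Z}$; keeping indices $\le n$ gives $\Omega_{H_n}$. An ideal of $\Omega_{H_n}$ is a sequence $[I_0,\dots,I_n]$ of ideals $I_k\subseteq R_k$ such that for every $1\le k\le n$: $\mathrm{ind}^k_{k-1}(I_{k-1})\subseteq I_k$, $\mathrm{res}^k_{k-1}(I_k)\subseteq I_{k-1}$, $\mathrm{jnd}^k_{k-1}(I_{k-1})\subseteq I_k$. It is proper if $I_0\ne R_0$. A proper ideal is prime if for all $0\le\ell\le k\le n$, $a\in R_k$, $b\in R_\ell$: whenever $(\mathrm{jnd}^m_i\mathrm{res}^k_i(a))\cdot(\mathrm{jnd}^m_j\mathrm{res}^\ell_j(b))\in I_m$ for all $0\le i\le k$, $0\le j\le\ell$, $m=\max(i,j)$, then $a\in I_k$ or $b\in I_\ell$. *)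

theory Defs
  imports Main "HOL-Computational_Algebra.Primes"
begin

text \<open>An element \<open>\<Sum>i\<le>k. m_i X_{k,i}\<close> of the ring R_k is represented by its
coefficient function \<open>m :: nat \<Rightarrow> int\<close>, required to vanish above k.\<close>

definition Rk :: "nat \<Rightarrow> (nat \<Rightarrow> int) set" where
  "Rk k = {m. \<forall>i>k. m i = 0}"

definition Rzero :: "nat \<Rightarrow> int" where
  "Rzero = (\<lambda>_. 0)"

definition Radd :: "(nat \<Rightarrow> int) \<Rightarrow> (nat \<Rightarrow> int) \<Rightarrow> (nat \<Rightarrow> int)" where
  "Radd a b = (\<lambda>t. a t + b t)"

definition Rneg :: "(nat \<Rightarrow> int) \<Rightarrow> (nat \<Rightarrow> int)" where
  "Rneg a = (\<lambda>t. - a t)"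

text \<open>Multiplication in R_k: X_{k,i} X_{k,j} = p^(k - max i j) X_{k, min i j}.\<close>
definition Rmult :: "nat \<Rightarrow> nat \<Rightarrow> (nat \<Rightarrow> int) \<Rightarrow> (nat \<Rightarrow> int) \<Rightarrow> (nat \<Rightarrow> int)" where
  "Rmult p k a b = (\<lambda>t. if t \<le> k then
      (\<Sum>i\<le>k. \<Sum>j\<le>k. if min i j = t then a i * b j * int p ^ (k - max i j) else 0)
    else 0)"

definition ind :: "nat \<Rightarrow> nat \<Rightarrow> (nat \<Rightarrow> int) \<Rightarrow> (nat \<Rightarrow> int)" where
  "ind l k m = (\<lambda>t. if t \<le> k then m t else 0)"

text \<open>res^l_k : R_l \<rightarrow> R_k, X_{l,i} \<mapsto> p^(l-k) X_{k,i} (i \<le> k), p^(l-i) (i \<ge> k).\<close>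
definition res :: "nat \<Rightarrow> nat \<Rightarrow> nat \<Rightarrow> (nat \<Rightarrow> int) \<Rightarrow> (nat \<Rightarrow> int)" where
  "res p l k m = (\<lambda>t. if t < k then int p ^ (l - k) * m t
      else if t = k then (\<Sum>i\<in>{k..l}. m i * int p ^ (l - i))
      else 0)"

text \<open>jnd^l_k : R_k \<rightarrow> R_l (the norm map), by the explicit formula.\<close>
definition jnd :: "nat \<Rightarrow> nat \<Rightarrow> nat \<Rightarrow> (nat \<Rightarrow> int) \<Rightarrow> (nat \<Rightarrow> int)" where
  "jnd p l k m = (\<lambda>i.
      if i = l then m k
      else if k \<le> i \<and> i < l then
        (m k ^ (p ^ (l - i)) - m k ^ (p ^ (l - i - 1))) div (int p ^ (l - i))
      else if i < k then
        ((\<Sum>s\<in>{i..k}. m s * int p ^ (k - s)) ^ (p ^ (l - k))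
         - (\<Sum>s\<in>{i+1..k}. m s * int p ^ (k - s)) ^ (p ^ (l - k))) div (int p ^ (l - i))
      else 0)"

definition is_ring_ideal :: "nat \<Rightarrow> nat \<Rightarrow> (nat \<Rightarrow> int) set \<Rightarrow> bool" where
  "is_ring_ideal p k J \<longleftrightarrow> J \<subseteq> Rk k \<and> Rzero \<in> J
     \<and> (\<forall>a\<in>J. \<forall>b\<in>J. Radd a b \<in> J) \<and> (\<forall>a\<in>J. Rneg a \<in> J)
     \<and> (\<forall>r\<in>Rk k. \<forall>a\<in>J. Rmult p k r a \<in> J)"

text \<open>An ideal of \<Omega>_{H_n}: a sequence [I_0,...,I_n] (only indices \<le> n matter).\<close>
definition is_tambara_ideal :: "nat \<Rightarrow> nat \<Rightarrow> (nat \<Rightarrow> (nat \<Rightarrow> int) set) \<Rightarrow> bool" where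
  "is_tambara_ideal p n I \<longleftrightarrow>
     (\<forall>k\<le>n. is_ring_ideal p k (I k))
     \<and> (\<forall>k. 1 \<le> k \<and> k \<le> n \<longrightarrow>
          ind k (k - 1) ` I (k - 1) \<subseteq> I k
        \<and> res p k (k - 1) ` I k \<subseteq> I (k - 1)
        \<and> jnd p k (k - 1) ` I (k - 1) \<subseteq> I k)"

definition is_prime_tambara_ideal :: "nat \<Rightarrow> nat \<Rightarrow> (nat \<Rightarrow> (nat \<Rightarrow> int) set) \<Rightarrow> bool" where
  "is_prime_tambara_ideal p n I \<longleftrightarrow>
     is_tambara_ideal p n I \<and> I 0 \<noteq> Rk 0
     \<and> (\<forall>l k a b. l \<le> k \<and> k \<le> n \<and> a \<in> Rk k \<and> b \<in> Rk l \<longrightarrow>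
          (\<forall>i\<le>k. \<forall>j\<le>l.
              Rmult p (max i j) (jnd p (max i j) i (res p k i a)) (jnd p (max i j) j (res p l j b))
                \<in> I (max i j))
          \<longrightarrow> a \<in> I k \<or> b \<in> I l)"

end

theory Submission
  imports Defs
begin

text \<open>The ideal axioms and the primeness condition only quantify over levels up to n,
  so both survive truncation to a smaller level.\<close>

lemma is_tambara_ideal_mono:
  assumes "is_tambara_ideal p n I" and "m \<le> n"
  shows "is_tambara_ideal p m I"
  using assms unfolding is_tambara_ideal_def by auto

lemma is_prime_tambara_ideal_mono:
  assumes "is_prime_tambara_ideal p n I" and "m \<le> n"
  shows "is_prime_tambara_ideal p m I"
proof -
  from assms(1) have ideal: "is_tambara_ideal p n I" and proper: "I 0 \<noteq> Rk 0"
    unfolding is_prime_tambara_ideal_def by blast+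
  have "is_tambara_ideal p m I"
    using ideal assms(2) by (rule is_tambara_ideal_mono)
  with proper show ?thesis
    using assms unfolding is_prime_tambara_ideal_def by (meson le_trans)
qed

theorem corollary4:
  fixes p r i k :: nat and I :: "nat \<Rightarrow> (nat \<Rightarrow> int) set"
  assumes "prime p" and "i \<le> k" and "k \<le> r"
    and "is_prime_tambara_ideal p k I"
  shows "is_prime_tambara_ideal p i I"
  using assms(4,2) by (rule is_prime_tambara_ideal_mono)

end
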